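(* If a learning dynamic over $n$ actions is finitely passive (resp. finitely lossless), then for any mixed strategy $\mathbf{x}^*\in\Delta^n$, its learning operator with shift $\mathbf{x}^*$ is finitely passive (resp. finitely lossless).
   Context: $\Delta^n=\{\mathbf{x}\in\mathbb{R}^n: x_j\ge 0,\ \sum_j x_j=1\}$; $\mathbf{e}_j$ is the $j$-th standard basis vector. A learning dynamic over $n$ actions is specified by a conversion function $f:\mathbb{R}^n\to\Delta^n$: given an initial state $\mathbf{q}^0\in\mathbb{R}^n$ and an input function $\mathbf{p}:[0,\infty)\to\mathbb{R}^n$ square integrable on bounded intervals, the state is $\mathbf{q}(t)=\mathbf{q}^0+\int_0^t\mathbf{p}(\tau)\,d\tau$ and the strategy is $\mathbf{x}(t)=f(\mathbf{q}(t))$. The learning operator with shift $\mathbf{x}^*\in\mathbb{R}^n$ has state $\mathbf{q}$, input $\mathbf{p}$, output $\mathbf{x}-\mathbf{x}^*$; it is passive via a storage function $L:\mathbb{R}^n\to\mathbb{R}$ if for every $\mathbf{q}^0$, every $\mathbf{p}$ and every $t\ge0$, $L(\mathbf{q}(t))\le L(\mathbf{q}^0)+\int_0^t\langle\mathbf{p}(\tau),\mathbf{x}(\tau)-\mathbf{x}^*\rangle\,d\tau$, lossless if equality always holds, and finitely passive (resp. finitely lossless) if it is passive (resp. lossless) via a storage function that is bounded from below. A learning dynamic is finitely passive (resp. finitely lossless) if for every action $j$ its learning operator with shift $\mathbf{e}_j$ is finitely passive (resp. finitely lossless). *)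

theory Defs
  imports "HOL-Analysis.Analysis"
begin

text \<open>Actions are indexed by a finite type 'n (n = CARD('n)); R^n is real^'n.\<close>

definition prob_simplex :: "(real^'n) set" where
  "prob_simplex = {x. (\<forall>j. x $ j \<ge> 0) \<and> (\<Sum>j\<in>UNIV. x $ j) = 1}"

definition learning_dynamic :: "(real^'n \<Rightarrow> real^'n) \<Rightarrow> bool" where
  "learning_dynamic f \<longleftrightarrow> (\<forall>q. f q \<in> prob_simplex)"

definition loc_sq_integrable :: "(real \<Rightarrow> real^'n) \<Rightarrow> bool" where
  "loc_sq_integrable p \<longleftrightarrow>
     (\<forall>t\<ge>0. p measurable_on {0..t} \<and> (\<lambda>\<tau>. (norm (p \<tau>))\<^sup>2) integrable_on {0..t})"

definition state :: "real^'n \<Rightarrow> (real \<Rightarrow> real^'n) \<Rightarrow> real \<Rightarrow> real^'n" where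
  "state q0 p t = q0 + integral {0..t} p"

definition passive_via ::
  "(real^'n \<Rightarrow> real^'n) \<Rightarrow> real^'n \<Rightarrow> (real^'n \<Rightarrow> real) \<Rightarrow> bool" where
  "passive_via f xs L \<longleftrightarrow>
     (\<forall>q0 p t. loc_sq_integrable p \<and> t \<ge> 0 \<longrightarrow>
        L (state q0 p t) \<le> L q0 + integral {0..t} (\<lambda>\<tau>. inner (p \<tau>) (f (state q0 p \<tau>) - xs)))"

definition lossless_via ::
  "(real^'n \<Rightarrow> real^'n) \<Rightarrow> real^'n \<Rightarrow> (real^'n \<Rightarrow> real) \<Rightarrow> bool" where
  "lossless_via f xs L \<longleftrightarrow>
     (\<forall>q0 p t. loc_sq_integrable p \<and> t \<ge> 0 \<longrightarrow>
        L (state q0 p t) = L q0 + integral {0..t} (\<lambda>\<tau>. inner (p \<tau>) (f (state q0 p \<tau>) - xs)))"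

definition finitely_passive_op :: "(real^'n \<Rightarrow> real^'n) \<Rightarrow> real^'n \<Rightarrow> bool" where
  "finitely_passive_op f xs \<longleftrightarrow> (\<exists>L. bdd_below (range L) \<and> passive_via f xs L)"

definition finitely_lossless_op :: "(real^'n \<Rightarrow> real^'n) \<Rightarrow> real^'n \<Rightarrow> bool" where
  "finitely_lossless_op f xs \<longleftrightarrow> (\<exists>L. bdd_below (range L) \<and> lossless_via f xs L)"

definition finitely_passive_dyn :: "(real^'n \<Rightarrow> real^'n) \<Rightarrow> bool" where
  "finitely_passive_dyn f \<longleftrightarrow> (\<forall>j. finitely_passive_op f (axis j 1))"

definition finitely_lossless_dyn :: "(real^'n \<Rightarrow> real^'n) \<Rightarrow> bool" where
  "finitely_lossless_dyn f \<longleftrightarrow> (\<forall>j. finitely_lossless_op f (axis j 1))"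

end

theory Submission
  imports Defs
begin

text \<open>
  The supply rate is affine in the shift: for weights x with sum 1,
  \<open>\<langle>p, f q - x\<rangle> = \<Sum>\<^sub>j x\<^sub>j \<langle>p, f q - e\<^sub>j\<rangle>\<close>. Hence if \<open>L\<^sub>j\<close> is a storage function for the
  shift \<open>e\<^sub>j\<close>, the convex combination \<open>\<Sum>\<^sub>j x\<^sub>j L\<^sub>j\<close> is one for the shift x; it is
  bounded below because the weights are nonnegative, and nonnegativity also
  preserves the passivity inequality (for losslessness the equality is preserved
  by any affine weights).
\<close>

lemma loc_sq_integrable_imp_integrable:
  fixes p :: "real \<Rightarrow> real^'n"
  assumes "loc_sq_integrable p" "t \<ge> 0"
  shows "p integrable_on {0..t}"
proof -
  have "p measurable_on {0..t}" and sq: "(\<lambda>\<tau>. (norm (p \<tau>))\<^sup>2) integrable_on {0..t}"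
    using assms unfolding loc_sq_integrable_def by auto
  then have p: "p \<in> borel_measurable (lebesgue_on {0..t})"
    by (simp add: measurable_on_iff_borel_measurable)
  have bound: "(\<lambda>\<tau>. 1 + (norm (p \<tau>))\<^sup>2) integrable_on {0..t}"
    using sq by (intro integrable_add) auto
  have "norm (p \<tau>) \<le> 1 + (norm (p \<tau>))\<^sup>2" for \<tau>
    using zero_le_power2[of "norm (p \<tau>) - 1"] zero_le_power2[of "norm (p \<tau>)"]
    unfolding power2_diff power_one mult_1_right by linarith
  then show ?thesis
    by (rule measurable_bounded_by_integrable_imp_integrable[OF p bound]) simp
qed

lemma integrable_inner_diff_iff:
  fixes p F :: "real \<Rightarrow> 'a::euclidean_space"
  assumes "p integrable_on S"
  shows "(\<lambda>\<tau>. inner (p \<tau>) (F \<tau> - y)) integrable_on S \<longleftrightarrow> (\<lambda>\<tau>. inner (p \<tau>) (F \<tau>)) integrable_on S"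
proof -
  have py: "(\<lambda>\<tau>. inner (p \<tau>) y) integrable_on S"
    using integrable_component[OF assms, of y] by simp
  have "(\<lambda>\<tau>. inner (p \<tau>) (F \<tau> - y)) = (\<lambda>\<tau>. inner (p \<tau>) (F \<tau>) - inner (p \<tau>) y)"
    and "(\<lambda>\<tau>. inner (p \<tau>) (F \<tau>)) = (\<lambda>\<tau>. inner (p \<tau>) (F \<tau> - y) + inner (p \<tau>) y)"
    by (simp_all add: inner_diff_right)
  then show ?thesis
    using integrable_add[OF _ py] integrable_diff[OF _ py] by metis
qed

lemma inner_diff_affine_comb_axis:
  fixes w :: "real^'n"
  assumes "(\<Sum>j\<in>UNIV. w $ j) = 1"
  shows "(\<Sum>j\<in>UNIV. w $ j * inner v (u - axis j 1)) = inner v (u - w)"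
proof -
  have "(\<Sum>j\<in>UNIV. w $ j * inner v (u - axis j 1))
      = (\<Sum>j\<in>UNIV. w $ j) * inner v u - (\<Sum>j\<in>UNIV. w $ j * v $ j)"
    by (simp add: inner_diff_right inner_axis right_diff_distrib sum_subtractf sum_distrib_right)
  also have "\<dots> = inner v (u - w)"
    by (simp add: assms inner_diff_right inner_vec_def mult.commute right_diff_distrib sum_subtractf)
  finally show ?thesis .
qed

text \<open>
  When the supply rate is not integrable, both sides are 0 (the junk value of
  \<^const>\<open>integral\<close>), so no integrability hypothesis on F is needed.
\<close>
lemma affine_comb_integral_inner_diff_axis:
  fixes p F :: "real \<Rightarrow> real^'n" and w :: "real^'n"
  assumes p: "p integrable_on S" and w: "(\<Sum>j\<in>UNIV. w $ j) = 1"
  shows "(\<Sum>j\<in>UNIV. w $ j * integral S (\<lambda>\<tau>. inner (p \<tau>) (F \<tau> - axis j 1)))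
       = integral S (\<lambda>\<tau>. inner (p \<tau>) (F \<tau> - w))"
proof (cases "(\<lambda>\<tau>. inner (p \<tau>) (F \<tau>)) integrable_on S")
  case True
  then have "(\<lambda>\<tau>. inner (p \<tau>) (F \<tau> - axis j 1)) integrable_on S" for j
    by (simp add: integrable_inner_diff_iff[OF p])
  then have "integral S (\<lambda>\<tau>. \<Sum>j\<in>UNIV. w $ j * inner (p \<tau>) (F \<tau> - axis j 1))
      = (\<Sum>j\<in>UNIV. integral S (\<lambda>\<tau>. w $ j * inner (p \<tau>) (F \<tau> - axis j 1)))"
    by (intro Henstock_Kurzweil_Integration.integral_sum integrable_on_mult_right) auto
  then show ?thesis
    by (simp add: inner_diff_affine_comb_axis[OF w])
next
  case False
  then show ?thesis
    by (simp add: integrable_inner_diff_iff[OF p] not_integrable_integral)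
qed

lemma prob_simplex_nonneg: "x \<in> prob_simplex \<Longrightarrow> x $ j \<ge> 0"
  and prob_simplex_sum: "x \<in> prob_simplex \<Longrightarrow> (\<Sum>j\<in>UNIV. x $ j) = 1"
  by (simp_all add: prob_simplex_def)

lemma bdd_below_range_nonneg_comb:
  fixes L :: "'n::finite \<Rightarrow> 'a \<Rightarrow> real"
  assumes "\<And>j. bdd_below (range (L j))" "\<And>j. w j \<ge> 0"
  shows "bdd_below (range (\<lambda>q. \<Sum>j\<in>UNIV. w j * L j q))"
proof -
  have "\<forall>j. \<exists>b. \<forall>q. b \<le> L j q"
    using assms(1) by (auto simp: bdd_below_def)
  then obtain b where b: "\<And>j q. b j \<le> L j q"
    by metis
  have "(\<Sum>j\<in>UNIV. w j * b j) \<le> (\<Sum>j\<in>UNIV. w j * L j q)" for q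
    by (intro sum_mono mult_left_mono b assms(2))
  then show ?thesis by (auto simp: bdd_below_def)
qed

lemma combined_storage_along_trajectory:
  fixes L :: "'n \<Rightarrow> real^'n \<Rightarrow> real" and w :: "real^'n"
  assumes "loc_sq_integrable p" "t \<ge> 0" "(\<Sum>j\<in>UNIV. w $ j) = 1"
  shows "(\<Sum>j\<in>UNIV. w $ j *
            (L j q0 + integral {0..t} (\<lambda>\<tau>. inner (p \<tau>) (f (state q0 p \<tau>) - axis j 1))))
       = (\<Sum>j\<in>UNIV. w $ j * L j q0) + integral {0..t} (\<lambda>\<tau>. inner (p \<tau>) (f (state q0 p \<tau>) - w))"
  using affine_comb_integral_inner_diff_axis[OF loc_sq_integrable_imp_integrable[OF assms(1,2)] assms(3)]
  by (simp add: distrib_left sum.distrib)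

lemma passive_via_convex_comb:
  fixes L :: "'n \<Rightarrow> real^'n \<Rightarrow> real"
  assumes "\<And>j. passive_via f (axis j 1) (L j)" and x: "x \<in> prob_simplex"
  shows "passive_via f x (\<lambda>q. \<Sum>j\<in>UNIV. x $ j * L j q)"
  unfolding passive_via_def
proof (intro allI impI, elim conjE)
  fix q0 :: "real^'n" and p :: "real \<Rightarrow> real^'n" and t :: real
  assume p: "loc_sq_integrable p" and t: "t \<ge> 0"
  have "(\<Sum>j\<in>UNIV. x $ j * L j (state q0 p t))
      \<le> (\<Sum>j\<in>UNIV. x $ j *
            (L j q0 + integral {0..t} (\<lambda>\<tau>. inner (p \<tau>) (f (state q0 p \<tau>) - axis j 1))))"
    using assms(1) p t
    by (intro sum_mono mult_left_mono prob_simplex_nonneg[OF x]) (auto simp: passive_via_def)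
  then show "(\<Sum>j\<in>UNIV. x $ j * L j (state q0 p t))
      \<le> (\<Sum>j\<in>UNIV. x $ j * L j q0) + integral {0..t} (\<lambda>\<tau>. inner (p \<tau>) (f (state q0 p \<tau>) - x))"
    by (simp only: combined_storage_along_trajectory[OF p t prob_simplex_sum[OF x]])
qed

lemma lossless_via_affine_comb:
  fixes L :: "'n \<Rightarrow> real^'n \<Rightarrow> real"
  assumes "\<And>j. lossless_via f (axis j 1) (L j)" and w: "(\<Sum>j\<in>UNIV. w $ j) = 1"
  shows "lossless_via f w (\<lambda>q. \<Sum>j\<in>UNIV. w $ j * L j q)"
  unfolding lossless_via_def
proof (intro allI impI, elim conjE)
  fix q0 :: "real^'n" and p :: "real \<Rightarrow> real^'n" and t :: real
  assume p: "loc_sq_integrable p" and t: "t \<ge> 0"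
  have "(\<Sum>j\<in>UNIV. w $ j * L j (state q0 p t))
      = (\<Sum>j\<in>UNIV. w $ j *
            (L j q0 + integral {0..t} (\<lambda>\<tau>. inner (p \<tau>) (f (state q0 p \<tau>) - axis j 1))))"
    using assms(1) p t by (intro sum.cong refl) (auto simp: lossless_via_def)
  then show "(\<Sum>j\<in>UNIV. w $ j * L j (state q0 p t))
      = (\<Sum>j\<in>UNIV. w $ j * L j q0) + integral {0..t} (\<lambda>\<tau>. inner (p \<tau>) (f (state q0 p \<tau>) - w))"
    by (simp only: combined_storage_along_trajectory[OF p t w])
qed

lemma finitely_passive_op_of_dyn:
  assumes "finitely_passive_dyn f" "x \<in> prob_simplex"
  shows "finitely_passive_op f x"
proof -
  obtain L where bdd: "\<And>j. bdd_below (range (L j))" and via: "\<And>j. passive_via f (axis j 1) (L j)"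
    using assms(1) unfolding finitely_passive_dyn_def finitely_passive_op_def by metis
  have "bdd_below (range (\<lambda>q. \<Sum>j\<in>UNIV. x $ j * L j q))"
    by (rule bdd_below_range_nonneg_comb[OF bdd prob_simplex_nonneg[OF assms(2)]])
  moreover have "passive_via f x (\<lambda>q. \<Sum>j\<in>UNIV. x $ j * L j q)"
    by (rule passive_via_convex_comb[OF via assms(2)])
  ultimately show ?thesis
    unfolding finitely_passive_op_def by blast
qed

lemma finitely_lossless_op_of_dyn:
  assumes "finitely_lossless_dyn f" "x \<in> prob_simplex"
  shows "finitely_lossless_op f x"
proof -
  obtain L where bdd: "\<And>j. bdd_below (range (L j))" and via: "\<And>j. lossless_via f (axis j 1) (L j)"
    using assms(1) unfolding finitely_lossless_dyn_def finitely_lossless_op_def by metis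
  have "bdd_below (range (\<lambda>q. \<Sum>j\<in>UNIV. x $ j * L j q))"
    by (rule bdd_below_range_nonneg_comb[OF bdd prob_simplex_nonneg[OF assms(2)]])
  moreover have "lossless_via f x (\<lambda>q. \<Sum>j\<in>UNIV. x $ j * L j q)"
    by (rule lossless_via_affine_comb[OF via prob_simplex_sum[OF assms(2)]])
  ultimately show ?thesis
    unfolding finitely_lossless_op_def by blast
qed

theorem proposition3p6:
  fixes f :: "real^'n \<Rightarrow> real^'n" and xs :: "real^'n"
  assumes "learning_dynamic f"
    and "xs \<in> prob_simplex"
  shows "(finitely_passive_dyn f \<longrightarrow> finitely_passive_op f xs)
       \<and> (finitely_lossless_dyn f \<longrightarrow> finitely_lossless_op f xs)"
  using assms(2) finitely_passive_op_of_dyn finitely_lossless_op_of_dyn by blast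

end
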